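(* Let $G$ be a nontrivial finite cyclic group. Then the order-sum graph $\Gamma_{OS}(G)$ is minimally edge connected if and only if $|G|$ is a prime.
   Context: The order-sum graph $\Gamma_{OS}(G)$ of a finite group $G$ is the simple undirected graph with vertex set $G$ in which two distinct elements $x,y$ are adjacent if and only if $o(x)+o(y)>|G|$, where $o(x)$ is the order of $x$. For a connected graph $\Gamma$, an edge cut-set is a set $S$ of edges such that $\Gamma-S$ is disconnected or has just one vertex, and the edge connectivity $\kappa'(\Gamma)$ is the smallest size of an edge cut-set. $\Gamma$ is minimally edge connected if $\kappa'(\Gamma-\epsilon)=\kappa'(\Gamma)-1$ for every edge $\epsilon$ of $\Gamma$. *)

theory Defs
  imports "HOL-Algebra.Algebra"
begin

definition os_edges :: "('a, 'b) monoid_scheme \<Rightarrow> 'a set set" where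
  "os_edges G = {{x, y} | x y. x \<in> carrier G \<and> y \<in> carrier G \<and> x \<noteq> y \<and>
       group.ord G x + group.ord G y > order G}"

definition graph_connected :: "'a set \<Rightarrow> 'a set set \<Rightarrow> bool" where
  "graph_connected V E \<longleftrightarrow>
     (\<forall>x\<in>V. \<forall>y\<in>V. (x, y) \<in> ({(u, v). u \<in> V \<and> v \<in> V \<and> {u, v} \<in> E})\<^sup>*)"

definition edge_cut_set :: "'a set \<Rightarrow> 'a set set \<Rightarrow> 'a set set \<Rightarrow> bool" where
  "edge_cut_set V E S \<longleftrightarrow> S \<subseteq> E \<and> (\<not> graph_connected V (E - S) \<or> card V = 1)"

definition edge_connectivity :: "'a set \<Rightarrow> 'a set set \<Rightarrow> nat" where
  "edge_connectivity V E = (LEAST k. \<exists>S. edge_cut_set V E S \<and> card S = k)"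

definition minimally_edge_connected :: "'a set \<Rightarrow> 'a set set \<Rightarrow> bool" where
  "minimally_edge_connected V E \<longleftrightarrow>
     (\<forall>e\<in>E. int (edge_connectivity V (E - {e})) = int (edge_connectivity V E) - 1)"

end

theory Submission
  imports Defs
begin

text \<open>In a finite group every element that does not generate has order at most |G|/2, so two
  elements are adjacent exactly when one of them is a generator: the order-sum graph of a cyclic
  group is the complete split graph with clique the generators and independent set the
  non-generators. Its edge connectivity is the number of generators, since isolating a
  non-generator costs that many edges and every cut has at least that many crossing edges.
  For prime order the graph is complete, and removing any edge lowers the connectivity by one.
  For composite order there are at least two non-generators, and removing an edge between two
  generators leaves every cut with enough crossing edges, so the connectivity does not drop.\<close>

definition cut_edges :: "'a set \<Rightarrow> 'a set set \<Rightarrow> 'a set \<Rightarrow> 'a set set" where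
  "cut_edges V E A = {e \<in> E. \<exists>u\<in>A. \<exists>v\<in>V - A. e = {u, v}}"

lemma cut_edges_complement: "A \<subseteq> V \<Longrightarrow> cut_edges V E (V - A) = cut_edges V E A"
  unfolding cut_edges_def by auto

lemma cut_edges_Diff: "cut_edges V (E - F) A = cut_edges V E A - F"
  unfolding cut_edges_def by blast

lemma finite_cut_edges: "finite V \<Longrightarrow> A \<subseteq> V \<Longrightarrow> finite (cut_edges V E A)"
  by (rule finite_subset[of _ "Pow V"]) (auto simp: cut_edges_def)

lemma not_connected_imp_cut:
  assumes "\<not> graph_connected V (E - S)"
  obtains A where "A \<subseteq> V" "A \<noteq> {}" "V - A \<noteq> {}" "cut_edges V E A \<subseteq> S"
proof -
  let ?R = "{(u, v). u \<in> V \<and> v \<in> V \<and> {u, v} \<in> E - S}"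
  from assms obtain x y where xy: "x \<in> V" "y \<in> V" "(x, y) \<notin> ?R\<^sup>*"
    unfolding graph_connected_def by blast
  define A where "A = {v \<in> V. (x, v) \<in> ?R\<^sup>*}"
  have "cut_edges V E A \<subseteq> S"
  proof
    fix e assume "e \<in> cut_edges V E A"
    then obtain u v where uv: "e \<in> E" "u \<in> A" "v \<in> V - A" "e = {u, v}"
      unfolding cut_edges_def by blast
    show "e \<in> S"
    proof (rule ccontr)
      assume "e \<notin> S"
      with uv have "(u, v) \<in> ?R" by (auto simp: A_def)
      with uv(2) have "(x, v) \<in> ?R\<^sup>*" by (auto simp: A_def intro: rtrancl_into_rtrancl)
      with uv(3) show False by (auto simp: A_def)
    qed
  qed
  moreover have "A \<subseteq> V" "x \<in> A" "y \<in> V - A" using xy by (auto simp: A_def)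
  ultimately show ?thesis using that by blast
qed

lemma edge_cut_set_isolate:
  assumes "v \<in> V" "w \<in> V" "v \<noteq> w" "S \<subseteq> E" "\<And>u. {v, u} \<in> E \<Longrightarrow> {v, u} \<in> S"
  shows "edge_cut_set V E S"
proof -
  let ?R = "{(u, v). u \<in> V \<and> v \<in> V \<and> {u, v} \<in> E - S}"
  have "(v, w) \<notin> ?R\<^sup>*"
  proof
    assume "(v, w) \<in> ?R\<^sup>*"
    then show False
      by (cases rule: converse_rtranclE) (use assms in auto)
  qed
  then show ?thesis using assms unfolding edge_cut_set_def graph_connected_def by blast
qed

lemma edge_cut_set_all_edges:
  assumes "V \<noteq> {}"
  shows "edge_cut_set V E E"
proof (cases "card V = 1")
  case False
  obtain x where "x \<in> V" using assms by blast
  moreover from False have "V \<noteq> {x}" by auto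
  then obtain y where "y \<in> V" "y \<noteq> x" using \<open>x \<in> V\<close> by blast
  ultimately show ?thesis
    by (intro edge_cut_set_isolate[of x V y]) auto
qed (simp add: edge_cut_set_def)

lemma edge_connectivity_le: "edge_cut_set V E S \<Longrightarrow> edge_connectivity V E \<le> card S"
  unfolding edge_connectivity_def by (rule Least_le) blast

lemma edge_connectivity_attained:
  assumes "V \<noteq> {}"
  obtains S where "edge_cut_set V E S" "card S = edge_connectivity V E"
proof -
  have "\<exists>k S. edge_cut_set V E S \<and> card S = k"
    using edge_cut_set_all_edges[OF assms] by blast
  from LeastI_ex[OF this] show ?thesis
    using that unfolding edge_connectivity_def by blast
qed

lemma edge_connectivity_le_Diff_edge:
  assumes "V \<noteq> {}"
  shows "edge_connectivity V E \<le> edge_connectivity V (E - {e}) + 1"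
proof (cases "e \<in> E")
  case True
  obtain S where S: "edge_cut_set V (E - {e}) S" "card S = edge_connectivity V (E - {e})"
    using edge_connectivity_attained[OF assms] .
  have "E - insert e S = E - {e} - S" by blast
  with S(1) True have "edge_cut_set V E (insert e S)"
    unfolding edge_cut_set_def by auto
  then have "edge_connectivity V E \<le> card (insert e S)"
    by (rule edge_connectivity_le)
  also have "\<dots> \<le> card S + 1"
    by (cases "finite S") (auto simp: card_insert_if)
  finally show ?thesis using S(2) by simp
qed simp

lemma edge_connectivity_ge_cut_edges:
  assumes "finite E" "card V \<noteq> 1" "V \<noteq> {}"
    and "\<And>A. A \<subseteq> V \<Longrightarrow> A \<noteq> {} \<Longrightarrow> V - A \<noteq> {} \<Longrightarrow> k \<le> card (cut_edges V E A)"
  shows "k \<le> edge_connectivity V E"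
proof -
  obtain S where S: "edge_cut_set V E S" "card S = edge_connectivity V E"
    using edge_connectivity_attained[OF assms(3)] .
  with assms(2) have "\<not> graph_connected V (E - S)"
    unfolding edge_cut_set_def by blast
  then obtain A where A: "A \<subseteq> V" "A \<noteq> {}" "V - A \<noteq> {}" "cut_edges V E A \<subseteq> S"
    by (rule not_connected_imp_cut)
  have "k \<le> card (cut_edges V E A)" using assms(4) A(1-3) .
  also have "\<dots> \<le> card S"
    using A(4) S(1) \<open>finite E\<close> unfolding edge_cut_set_def by (meson card_mono finite_subset)
  finally show ?thesis using S(2) by simp
qed

definition complete_split_edges :: "'a set \<Rightarrow> 'a set \<Rightarrow> 'a set set" where
  "complete_split_edges V K = {{x, y} | x y. x \<in> V \<and> y \<in> V \<and> x \<noteq> y \<and> (x \<in> K \<or> y \<in> K)}"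

lemma doubleton_in_complete_split_edges_iff [simp]:
  "{x, y} \<in> complete_split_edges V K \<longleftrightarrow> x \<in> V \<and> y \<in> V \<and> x \<noteq> y \<and> (x \<in> K \<or> y \<in> K)"
  unfolding complete_split_edges_def by (auto simp: doubleton_eq_iff)

lemma finite_complete_split_edges: "finite V \<Longrightarrow> finite (complete_split_edges V K)"
  by (rule finite_subset[of _ "Pow V"]) (auto simp: complete_split_edges_def)

lemma card_cut_edges_complete_split_one_side:
  assumes "finite V" "A \<subseteq> V" "a \<in> A" "K \<subseteq> V - A"
  shows "card K \<le> card (cut_edges V (complete_split_edges V K) A)"
proof (rule card_inj_on_le)
  show "inj_on (\<lambda>g. {a, g}) K" using assms by (auto simp: inj_on_def doubleton_eq_iff)
  show "(\<lambda>g. {a, g}) ` K \<subseteq> cut_edges V (complete_split_edges V K) A"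
    using assms unfolding cut_edges_def by auto
  show "finite (cut_edges V (complete_split_edges V K) A)"
    using assms by (simp add: finite_cut_edges)
qed

lemma card_cut_edges_complete_split_both_sides:
  assumes "finite V" "A \<subseteq> V" "K \<subseteq> V" "g \<in> K \<inter> A" "h \<in> K - A"
  shows "card V - 1 \<le> card (cut_edges V (complete_split_edges V K) A)"
proof -
  define f where "f v = (if v \<in> A then {v, h} else {g, v})" for v
  have "card (V - {h}) \<le> card (cut_edges V (complete_split_edges V K) A)"
  proof (rule card_inj_on_le)
    show "inj_on f (V - {h})"
    proof (rule inj_onI)
      fix x y assume "x \<in> V - {h}" "y \<in> V - {h}" "f x = f y"
      then show "x = y"
        using assms(4,5) unfolding f_def by (auto simp: doubleton_eq_iff split: if_splits)
    qed
    show "f ` (V - {h}) \<subseteq> cut_edges V (complete_split_edges V K) A"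
    proof
      fix e assume "e \<in> f ` (V - {h})"
      then obtain v where v: "v \<in> V - {h}" "e = f v" by blast
      show "e \<in> cut_edges V (complete_split_edges V K) A"
      proof (cases "v \<in> A")
        case True
        then show ?thesis using v assms unfolding f_def cut_edges_def by auto
      next
        case False
        then have "v \<noteq> g" using assms(4) by blast
        with False show ?thesis using v assms unfolding f_def cut_edges_def by auto
      qed
    qed
    show "finite (cut_edges V (complete_split_edges V K) A)"
      using assms by (simp add: finite_cut_edges)
  qed
  moreover have "card (V - {h}) = card V - 1"
    using assms by (auto intro: card_Diff_singleton)
  ultimately show ?thesis by simp
qed

lemma card_cut_edges_complete_split:
  assumes "finite V" "K \<subseteq> V" "V - K \<noteq> {}" "A \<subseteq> V" "A \<noteq> {}" "V - A \<noteq> {}"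
  shows "card K \<le> card (cut_edges V (complete_split_edges V K) A)"
proof -
  obtain a b where ab: "a \<in> A" "b \<in> V - A" using assms(5,6) by blast
  consider "K \<subseteq> V - A" | "K \<subseteq> A" | g h where "g \<in> K \<inter> A" "h \<in> K - A"
    using assms(2) by blast
  then show ?thesis
  proof cases
    case 1
    then show ?thesis using card_cut_edges_complete_split_one_side[OF assms(1,4) ab(1)] by blast
  next
    case 2
    then have "K \<subseteq> V - (V - A)" using assms(2) by blast
    then have "card K \<le> card (cut_edges V (complete_split_edges V K) (V - A))"
      using card_cut_edges_complete_split_one_side[OF assms(1) _ ab(2)] by blast
    then show ?thesis using assms(4) by (simp add: cut_edges_complement)
  next
    case 3
    have "K \<subset> V" using assms(2,3) by blast
    with assms(1) have "card K < card V" by (rule psubset_card_mono)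
    then show ?thesis using card_cut_edges_complete_split_both_sides[OF assms(1,4,2) 3] by linarith
  qed
qed

lemma edge_connectivity_complete_split:
  assumes "finite V" "K \<subseteq> V" "v \<in> V - K" "w \<in> V" "w \<noteq> v"
  shows "edge_connectivity V (complete_split_edges V K) = card K"
proof (rule antisym)
  let ?S = "(\<lambda>g. {v, g}) ` K"
  have "edge_cut_set V (complete_split_edges V K) ?S"
  proof (rule edge_cut_set_isolate)
    show "?S \<subseteq> complete_split_edges V K" using assms(2,3) by auto
    show "{v, u} \<in> ?S" if "{v, u} \<in> complete_split_edges V K" for u
      using that assms(3) by auto
  qed (use assms in auto)
  then have "edge_connectivity V (complete_split_edges V K) \<le> card ?S"
    by (rule edge_connectivity_le)
  also have "card ?S = card K"
    using assms(3) by (intro card_image) (auto simp: inj_on_def doubleton_eq_iff)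
  finally show "edge_connectivity V (complete_split_edges V K) \<le> card K" .
  have "card V \<noteq> 1" using assms(3-5) by (auto simp: card_1_singleton_iff)
  with assms show "card K \<le> edge_connectivity V (complete_split_edges V K)"
    by (intro edge_connectivity_ge_cut_edges finite_complete_split_edges card_cut_edges_complete_split)
      auto
qed

lemma not_minimally_edge_connected_complete_split:
  assumes "finite V" "K \<subseteq> V" "2 \<le> card (V - K)" "a \<in> K" "b \<in> K" "a \<noteq> b"
  shows "\<not> minimally_edge_connected V (complete_split_edges V K)"
proof
  let ?E = "complete_split_edges V K"
  assume minimal: "minimally_edge_connected V ?E"
  obtain v w where vw: "v \<in> V - K" "w \<in> V - K" "v \<noteq> w"
    using assms(3) by (auto simp: numeral_2_eq_2 card_le_Suc_iff)
  then have connectivity: "edge_connectivity V ?E = card K"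
    using assms by (intro edge_connectivity_complete_split) auto
  have "card K \<le> edge_connectivity V (?E - {{a, b}})"
  proof (rule edge_connectivity_ge_cut_edges)
    fix A assume A: "A \<subseteq> V" "A \<noteq> {}" "V - A \<noteq> {}"
    show "card K \<le> card (cut_edges V (?E - {{a, b}}) A)"
    proof (cases "{a, b} \<in> cut_edges V ?E A")
      case False
      then show ?thesis
        using card_cut_edges_complete_split[OF assms(1,2) _ A] vw(1) by (auto simp: cut_edges_Diff)
    next
      case True
      then have "a \<in> A \<and> b \<notin> A \<or> b \<in> A \<and> a \<notin> A"
        unfolding cut_edges_def by (auto simp: doubleton_eq_iff)
      then have "card V - 1 \<le> card (cut_edges V ?E A)"
        using assms A card_cut_edges_complete_split_both_sides[OF assms(1) A(1) assms(2)] by blast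
      moreover have "card V = card K + card (V - K)"
        using assms by (metis card_Diff_subset card_mono finite_subset le_add_diff_inverse)
      moreover have "card (cut_edges V ?E A - {{a, b}}) = card (cut_edges V ?E A) - 1"
        using True finite_cut_edges[OF assms(1) A(1)] by simp
      ultimately show ?thesis
        using assms(3) by (simp add: cut_edges_Diff)
    qed
  qed (use assms vw in \<open>auto simp: finite_complete_split_edges card_1_singleton_iff\<close>)
  moreover have "{a, b} \<in> ?E" using assms by auto
  ultimately show False
    using minimal connectivity unfolding minimally_edge_connected_def by fastforce
qed

text \<open>With a single vertex outside the clique, the complete split graph is the complete graph.\<close>

lemma minimally_edge_connected_complete_graph:
  assumes "finite V" "v \<in> V" "2 \<le> card V"
  shows "minimally_edge_connected V (complete_split_edges V (V - {v}))"
  unfolding minimally_edge_connected_def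
proof
  let ?E = "complete_split_edges V (V - {v})"
  fix e assume "e \<in> ?E"
  then obtain x y where xy: "e = {x, y}" "x \<in> V" "y \<in> V" "x \<noteq> y"
    unfolding complete_split_edges_def by blast
  let ?S = "(\<lambda>u. {x, u}) ` (V - {x, y})"
  have "edge_cut_set V (?E - {e}) ?S"
    using xy by (intro edge_cut_set_isolate[of x V y]) (auto simp: doubleton_eq_iff)
  then have "edge_connectivity V (?E - {e}) \<le> card ?S"
    by (rule edge_connectivity_le)
  also have "card ?S = card V - 2"
    using xy assms(1) by (subst card_image) (auto simp: inj_on_def doubleton_eq_iff)
  finally have "edge_connectivity V (?E - {e}) \<le> card V - 2" .
  moreover have "edge_connectivity V ?E = card V - 1"
  proof -
    obtain w where "w \<in> V" "w \<noteq> v" using xy by blast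
    then show ?thesis
      using assms edge_connectivity_complete_split[of V "V - {v}" v w]
      by (simp add: card_Diff_singleton)
  qed
  moreover have "edge_connectivity V ?E \<le> edge_connectivity V (?E - {e}) + 1"
    using xy by (intro edge_connectivity_le_Diff_edge) auto
  ultimately show "int (edge_connectivity V (?E - {e})) = int (edge_connectivity V ?E) - 1"
    using assms(3) by linarith
qed

lemma composite_factorization:
  fixes n :: nat
  assumes "1 < n" "\<not> Factorial_Ring.prime n"
  obtains p k where "n = p * k" "2 \<le> p" "2 \<le> k"
proof -
  obtain p where "p dvd n" "p \<noteq> 1" "p \<noteq> n" using assms by (auto simp: prime_nat_iff)
  then obtain k where "n = p * k" "p \<noteq> 1" "k \<noteq> 1" by (auto elim: dvdE)
  moreover have "p \<noteq> 0" "k \<noteq> 0"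
    using assms(1) \<open>n = p * k\<close> by (metis mult_0 mult_0_right not_less_zero)+
  ultimately show ?thesis using that by fastforce
qed

definition generators :: "('a, 'b) monoid_scheme \<Rightarrow> 'a set" where
  "generators G = {x \<in> carrier G. group.ord G x = order G}"

context group
begin

lemma two_ord_le_order:
  assumes "finite (carrier G)" "x \<in> carrier G" "x \<notin> generators G"
  shows "2 * ord x \<le> order G"
proof -
  obtain c where c: "order G = ord x * c"
    using ord_dvd_group_order[OF assms(2)] by (auto elim: dvdE)
  have "c \<noteq> 1" using c assms(2,3) unfolding generators_def by auto
  moreover have "c \<noteq> 0" using c assms(1) order_gt_0_iff_finite by fastforce
  ultimately have "ord x * 2 \<le> ord x * c" by (intro mult_le_mono2) linarith
  then show ?thesis using c by simp
qed

lemma os_edges_eq_complete_split_edges: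
  assumes "finite (carrier G)"
  shows "os_edges G = complete_split_edges (carrier G) (generators G)"
proof -
  have "order G < ord x + ord y \<longleftrightarrow> x \<in> generators G \<or> y \<in> generators G"
    if "x \<in> carrier G" "y \<in> carrier G" for x y
  proof
    assume sum: "order G < ord x + ord y"
    show "x \<in> generators G \<or> y \<in> generators G"
    proof (rule ccontr)
      assume "\<not> (x \<in> generators G \<or> y \<in> generators G)"
      then have "2 * ord x \<le> order G" "2 * ord y \<le> order G"
        using two_ord_le_order[OF assms] that by auto
      with sum show False by linarith
    qed
  next
    assume "x \<in> generators G \<or> y \<in> generators G"
    then show "order G < ord x + ord y"
      using ord_ge_1[OF assms] that unfolding generators_def by fastforce
  qed
  then show ?thesis unfolding os_edges_def complete_split_edges_def by blast
qed

lemma one_notin_generators: "1 < order G \<Longrightarrow> \<one> \<notin> generators G"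
  by (simp add: generators_def)

lemma generators_of_prime_order:
  assumes "Factorial_Ring.prime (order G)"
  shows "generators G = carrier G - {\<one>}"
proof -
  have "ord x = order G" if "x \<in> carrier G" "x \<noteq> \<one>" for x
    using that ord_dvd_group_order[OF that(1)] ord_eq_1[OF that(1)] assms
    by (auto simp: prime_nat_iff)
  moreover have "\<one> \<notin> generators G"
    using prime_gt_1_nat[OF assms] by (rule one_notin_generators)
  ultimately show ?thesis unfolding generators_def by blast
qed

lemma inv_in_generators: "g \<in> generators G \<Longrightarrow> inv g \<in> generators G"
  by (simp add: generators_def)

lemma inv_neq_generator:
  assumes "2 < order G" "g \<in> generators G"
  shows "inv g \<noteq> g"
proof
  have g: "g \<in> carrier G" "ord g = order G" using assms(2) by (auto simp: generators_def)
  assume "inv g = g"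
  then have "g [^] (2::nat) = \<one>"
    using r_inv[OF g(1)] g(1) by (simp add: numeral_2_eq_2)
  then have "order G dvd 2" using pow_eq_id[OF g(1)] g(2) by simp
  with assms(1) show False by (simp add: nat_dvd_not_less)
qed

lemma cyclic_group_generator:
  assumes "cyclic_group G"
  obtains g where "g \<in> generators G"
proof -
  obtain g where "g \<in> carrier G" "subgroup_generated G {g} = G"
    using assms unfolding cyclic_group_def by blast
  then have "g \<in> generators G" using cyclic_order_is_ord by (simp add: generators_def)
  then show ?thesis by (rule that)
qed

lemma two_le_card_non_generators:
  assumes "finite (carrier G)" "cyclic_group G" "order G = p * k" "2 \<le> p" "2 \<le> k"
  shows "2 \<le> card (carrier G - generators G)"
proof -
  obtain g where g: "g \<in> generators G" using assms(2) by (rule cyclic_group_generator)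
  then have "g \<in> carrier G" "ord g = p * k" using assms(3) by (auto simp: generators_def)
  then have "ord (g [^] k) = p" using assms(4,5) ord_pow[of g k] by simp
  then have "g [^] k \<notin> generators G" "g [^] k \<noteq> \<one>"
    using assms(3-5) \<open>g \<in> carrier G\<close> by (auto simp: generators_def)
  moreover have "\<one> \<notin> generators G"
    using assms(3-5) mult_le_mono[OF assms(4,5)] by (intro one_notin_generators) simp
  ultimately have "{\<one>, g [^] k} \<subseteq> carrier G - generators G" "card {\<one>, g [^] k} = 2"
    using \<open>g \<in> carrier G\<close> by auto
  then show ?thesis using assms(1) by (metis card_mono finite_Diff)
qed

end

theorem mainTheorem5:
  fixes G :: "('a, 'b) monoid_scheme"
  assumes "group G" and "finite (carrier G)" and "cyclic_group G" and "order G > 1"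
  shows "minimally_edge_connected (carrier G) (os_edges G) \<longleftrightarrow> Factorial_Ring.prime (order G)"
proof -
  interpret group G by fact
  have edges: "os_edges G = complete_split_edges (carrier G) (generators G)"
    using assms(2) by (rule os_edges_eq_complete_split_edges)
  have card: "card (carrier G) = order G" by (simp add: order_def)
  show ?thesis
  proof
    assume minimal: "minimally_edge_connected (carrier G) (os_edges G)"
    show "Factorial_Ring.prime (order G)"
    proof (rule ccontr)
      assume "\<not> Factorial_Ring.prime (order G)"
      with assms(4) obtain p k where pk: "order G = p * k" "2 \<le> p" "2 \<le> k"
        by (rule composite_factorization)
      then have "2 < order G" using mult_le_mono[OF pk(2,3)] by simp
      obtain g where g: "g \<in> generators G" using assms(3) by (rule cyclic_group_generator)
      have "\<not> minimally_edge_connected (carrier G) (os_edges G)"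
        unfolding edges
      proof (rule not_minimally_edge_connected_complete_split)
        show "2 \<le> card (carrier G - generators G)"
          using assms(2,3) pk by (rule two_le_card_non_generators)
        show "inv\<^bsub>G\<^esub> g \<noteq> g" using \<open>2 < order G\<close> g by (rule inv_neq_generator)
        show "g \<in> generators G" "inv\<^bsub>G\<^esub> g \<in> generators G"
          using g by (auto intro: inv_in_generators)
      qed (auto simp: assms(2) generators_def)
      with minimal show False by contradiction
    qed
  next
    assume prime: "Factorial_Ring.prime (order G)"
    have "minimally_edge_connected (carrier G)
        (complete_split_edges (carrier G) (carrier G - {\<one>\<^bsub>G\<^esub>}))"
      using assms(2) card prime_ge_2_nat[OF prime]
      by (intro minimally_edge_connected_complete_graph) auto
    then show "minimally_edge_connected (carrier G) (os_edges G)"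
      by (simp add: edges generators_of_prime_order[OF prime])
  qed
qed

end
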